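(* Let $\mathcal F=\{g\}\cup\{f_p:p\text{ prime}\}$, where $g$ and $f_p$ are the implicit operations of $\mathsf{RCR}$ defined by $\mathsf{inv}(x,y)=(x^2y\approx x)\wedge(xy^2\approx y)$ and $\exists\mathsf{root}_p(x,y)=\exists z\,(\mathsf{inv}(p,z)\wedge y^p\approx(1-zp)x)$ respectively. Then the pp expansion of $\mathsf{RCR}$ induced by $\mathcal F$ is simple and coincides with $\mathsf{ICM}=\mathsf{RCR}[\mathscr L_{\mathcal F}]$ (identifying the new symbol for $g$ with $(\,)^*$ and that for $f_p$ with $r_p$).
   Context: Rings are unital in the language $\{+,\cdot,-,0,1\}$; $\mathsf{RCR}$ is the quasivariety of reduced commutative rings. A field is weakly rooted if it has characteristic $0$, or prime characteristic $p$ with every element having a $p$-th root. Weak inverse: $a^*=a^{-1}$ if $a\ne0$, $0^*=0$; weak $p$-root: $r_p(a)=\sqrt[p]{a}$ if characteristic is $p$, else $0$. An implicitly closed field is a weakly rooted field expanded by $(\,)^*$ and all $r_p$; $\mathsf{ICM}$ is the class of algebras isomorphic to subalgebras of direct products of implicitly closed fields. An implicit operation $f$ of $\mathsf{RCR}$ defined by a formula $\varphi(\vec x,y)$ is a family of partial functions $f^{\mathbf A}$ ($\mathbf A\in\mathsf{RCR}$) with $\mathbf A\models\varphi(\vec a,b)$ iff $\vec a\in\mathrm{dom} f^{\mathbf A}$ and $f^{\mathbf A}(\vec a)=b$. For a set $\mathcal F$ of pp definable extendable implicit operations of a quasivariety $\mathsf K$, $\mathscr L_{\mathcal F}$ adds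 a new $n$-ary symbol for each $n$-ary $f\in\mathcal F$; $\mathsf K[\mathscr L_{\mathcal F}]$ is the class of expansions of those $\mathbf A\in\mathsf K$ in which all $f^{\mathbf A}$ ($f\in\mathcal F$) are total, interpreting the new symbols as $f^{\mathbf A}$; the pp expansion induced by $\mathcal F$ is the class of subalgebras of members of $\mathsf K[\mathscr L_{\mathcal F}]$, and it is simple if it equals $\mathsf K[\mathscr L_{\mathcal F}]$. *)

theory Defs
  imports "HOL-Computational_Algebra.Primes"
begin

text \<open>Algebras in the language of rings \<open>{+,\<cdot>,-,0,1}\<close> expanded by a unary symbol
  \<open>astar\<close> (for the implicit operation g, i.e. ( )*) and unary symbols \<open>aroot p\<close>
  (for f_p, i.e. r_p), only prime indices p being meaningful.\<close>

record 'a alg =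
  acar  :: "'a set"
  aadd  :: "'a \<Rightarrow> 'a \<Rightarrow> 'a"
  amul  :: "'a \<Rightarrow> 'a \<Rightarrow> 'a"
  aneg  :: "'a \<Rightarrow> 'a"
  azero :: 'a
  aone  :: 'a
  astar :: "'a \<Rightarrow> 'a"
  aroot :: "nat \<Rightarrow> 'a \<Rightarrow> 'a"

fun natc :: "('a, 'b) alg_scheme \<Rightarrow> nat \<Rightarrow> 'a" where
  "natc A 0 = azero A"
| "natc A (Suc n) = aadd A (natc A n) (aone A)"

fun pw :: "('a, 'b) alg_scheme \<Rightarrow> 'a \<Rightarrow> nat \<Rightarrow> 'a" where
  "pw A x 0 = aone A"
| "pw A x (Suc n) = amul A (pw A x n) x"

definition comm_ring_alg :: "('a, 'b) alg_scheme \<Rightarrow> bool" where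
  "comm_ring_alg A \<longleftrightarrow>
     azero A \<in> acar A \<and> aone A \<in> acar A \<and>
     (\<forall>x\<in>acar A. \<forall>y\<in>acar A. aadd A x y \<in> acar A \<and> amul A x y \<in> acar A) \<and>
     (\<forall>x\<in>acar A. aneg A x \<in> acar A) \<and>
     (\<forall>x\<in>acar A. \<forall>y\<in>acar A. \<forall>z\<in>acar A.
        aadd A (aadd A x y) z = aadd A x (aadd A y z) \<and>
        amul A (amul A x y) z = amul A x (amul A y z) \<and>
        amul A x (aadd A y z) = aadd A (amul A x y) (amul A x z)) \<and>
     (\<forall>x\<in>acar A. \<forall>y\<in>acar A. aadd A x y = aadd A y x \<and> amul A x y = amul A y x) \<and>
     (\<forall>x\<in>acar A. aadd A x (azero A) = x \<and> aadd A x (aneg A x) = azero A \<and>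
        amul A x (aone A) = x)"

definition reduced_alg :: "('a, 'b) alg_scheme \<Rightarrow> bool" where
  "reduced_alg A \<longleftrightarrow> (\<forall>x\<in>acar A. \<forall>n. pw A x n = azero A \<longrightarrow> x = azero A)"

definition RCR :: "('a, 'b) alg_scheme \<Rightarrow> bool" where
  "RCR A \<longleftrightarrow> comm_ring_alg A \<and> reduced_alg A"

definition inv_fm :: "('a, 'b) alg_scheme \<Rightarrow> 'a \<Rightarrow> 'a \<Rightarrow> bool" where
  "inv_fm A x y \<longleftrightarrow> amul A (amul A x x) y = x \<and> amul A x (amul A y y) = y"

definition root_fm :: "('a, 'b) alg_scheme \<Rightarrow> nat \<Rightarrow> 'a \<Rightarrow> 'a \<Rightarrow> bool" where
  "root_fm A p x y \<longleftrightarrow>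
     (\<exists>z\<in>acar A. inv_fm A (natc A p) z \<and>
        pw A y p = amul A (aadd A (aone A) (aneg A (amul A z (natc A p)))) x)"

text \<open>RCR[L_F]: expansions of members of RCR in which g and all f_p are total, the new
  symbols being interpreted as g^A and f_p^A.  Since A |= phi(a,b) iff a in dom f^A and
  f^A(a) = b, this says exactly that phi(a, new-symbol(a)) holds for every a.\<close>
definition RCR_LF :: "('a, 'b) alg_scheme \<Rightarrow> bool" where
  "RCR_LF A \<longleftrightarrow> RCR A \<and>
     (\<forall>x\<in>acar A. astar A x \<in> acar A \<and> inv_fm A x (astar A x)) \<and>
     (\<forall>p x. prime p \<and> x \<in> acar A \<longrightarrow> aroot A p x \<in> acar A \<and> root_fm A p x (aroot A p x))"

definition hom_alg :: "('a, 'b) alg_scheme \<Rightarrow> ('c, 'd) alg_scheme \<Rightarrow> ('a \<Rightarrow> 'c) \<Rightarrow> bool" where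
  "hom_alg A B h \<longleftrightarrow>
     (\<forall>x\<in>acar A. h x \<in> acar B) \<and>
     (\<forall>x\<in>acar A. \<forall>y\<in>acar A. h (aadd A x y) = aadd B (h x) (h y) \<and>
                                h (amul A x y) = amul B (h x) (h y)) \<and>
     (\<forall>x\<in>acar A. h (aneg A x) = aneg B (h x)) \<and>
     h (azero A) = azero B \<and> h (aone A) = aone B \<and>
     (\<forall>x\<in>acar A. h (astar A x) = astar B (h x)) \<and>
     (\<forall>p. prime p \<longrightarrow> (\<forall>x\<in>acar A. h (aroot A p x) = aroot B p (h x)))"

definition is_alg :: "('a, 'b) alg_scheme \<Rightarrow> bool" where
  "is_alg A \<longleftrightarrow>
     azero A \<in> acar A \<and> aone A \<in> acar A \<and>
     (\<forall>x\<in>acar A. \<forall>y\<in>acar A. aadd A x y \<in> acar A \<and> amul A x y \<in> acar A) \<and>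
     (\<forall>x\<in>acar A. aneg A x \<in> acar A \<and> astar A x \<in> acar A) \<and>
     (\<forall>p. prime p \<longrightarrow> (\<forall>x\<in>acar A. aroot A p x \<in> acar A))"

text \<open>B is (isomorphic to) a subalgebra of A: B is an algebra embedding into A.\<close>
definition embeds :: "('a, 'b) alg_scheme \<Rightarrow> ('c, 'd) alg_scheme \<Rightarrow> bool" where
  "embeds B A \<longleftrightarrow> is_alg B \<and> (\<exists>h. hom_alg B A h \<and> inj_on h (acar B))"

definition field_alg :: "('a, 'b) alg_scheme \<Rightarrow> bool" where
  "field_alg F \<longleftrightarrow> comm_ring_alg F \<and> aone F \<noteq> azero F \<and>
     (\<forall>x\<in>acar F. x \<noteq> azero F \<longrightarrow> (\<exists>y\<in>acar F. amul F x y = aone F))"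

definition char_zero_alg :: "('a, 'b) alg_scheme \<Rightarrow> bool" where
  "char_zero_alg F \<longleftrightarrow> (\<forall>n>0. natc F n \<noteq> azero F)"

definition weakly_rooted :: "('a, 'b) alg_scheme \<Rightarrow> bool" where
  "weakly_rooted F \<longleftrightarrow> field_alg F \<and>
     (char_zero_alg F \<or>
      (\<exists>p. prime p \<and> natc F p = azero F \<and> (\<forall>x\<in>acar F. \<exists>y\<in>acar F. pw F y p = x)))"

definition impl_closed_field :: "('a, 'b) alg_scheme \<Rightarrow> bool" where
  "impl_closed_field F \<longleftrightarrow> weakly_rooted F \<and>
     (\<forall>x\<in>acar F. astar F x \<in> acar F \<and>
        (x \<noteq> azero F \<longrightarrow> amul F x (astar F x) = aone F) \<and>
        (x = azero F \<longrightarrow> astar F x = azero F)) \<and>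
     (\<forall>p. prime p \<longrightarrow> (\<forall>x\<in>acar F. aroot F p x \<in> acar F \<and>
        (natc F p = azero F \<longrightarrow> pw F (aroot F p x) p = x) \<and>
        (natc F p \<noteq> azero F \<longrightarrow> aroot F p x = azero F)))"

text \<open>ICM membership, with index set of type 'i and field carriers of type 'c:
  A is an algebra embedding into a direct product prod_{i in I} F_i of implicitly closed
  fields, i.e. a jointly injective family of homomorphisms h_i : A -> F_i.\<close>
definition ICM :: "'i itself \<Rightarrow> ('a, 'b) alg_scheme \<Rightarrow> ('c, 'd) alg_scheme itself \<Rightarrow> bool" where
  "ICM _ A _ \<longleftrightarrow> is_alg A \<and>
     (\<exists>(I :: 'i set) (F :: 'i \<Rightarrow> ('c, 'd) alg_scheme) (h :: 'i \<Rightarrow> 'a \<Rightarrow> 'c).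
        (\<forall>i\<in>I. impl_closed_field (F i) \<and> hom_alg A (F i) (h i)) \<and>
        (\<forall>x\<in>acar A. \<forall>y\<in>acar A. (\<forall>i\<in>I. h i x = h i y) \<longrightarrow> x = y))"

end

theory Submission
  imports Defs "HOL-Algebra.Ring_Divisibility"
begin

text \<open>
  Weak inverses are unique in a commutative ring, so the witness \<open>z\<close> of \<open>root_fm\<close> is forced
  to be \<open>p*\<close>.  Hence \<open>RCR[L_F]\<close> is axiomatised by reducedness and the equations
  \<open>x\<^sup>2 x* = x\<close>, \<open>x x*\<^sup>2 = x*\<close>, \<open>r\<^sub>p(x)\<^sup>p = e\<^sub>p x\<close> with the idempotent \<open>e\<^sub>p = 1 - p* p\<close>.
  Such quasi-identities pass to subalgebras and subdirect products; this gives simplicity,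
  and since implicitly closed fields satisfy them, \<open>ICM \<subseteq> RCR[L_F]\<close>.

  Conversely, in a member \<open>A\<close> every \<open>d \<noteq> 0\<close> is von Neumann regular (\<open>d = d\<^sup>2 d*\<close>), so the
  idempotent \<open>d d*\<close>, and with it \<open>d\<close>, avoids some maximal ideal: \<open>A\<close> is a subdirect product
  of the fields \<open>A/M\<close>.  There \<open>( )*\<close> becomes the weak inverse, and \<open>e\<^sub>p\<close> becomes 1 in
  characteristic \<open>p\<close> and 0 otherwise, so \<open>r\<^sub>p\<close> becomes the weak \<open>p\<close>-th root; these roots
  exist because \<open>A \<rightarrow> A/M\<close> is onto, and are unique by the Frobenius identity.
\<close>

section \<open>The ring reduct\<close>

definition ring_of :: "('a, 'b) alg_scheme \<Rightarrow> 'a ring" where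
  "ring_of A = \<lparr>carrier = acar A, mult = amul A, one = aone A, zero = azero A, add = aadd A\<rparr>"

lemma ring_of_simps:
  "carrier (ring_of A) = acar A" "mult (ring_of A) = amul A" "one (ring_of A) = aone A"
  "zero (ring_of A) = azero A" "add (ring_of A) = aadd A"
  by (simp_all add: ring_of_def)

lemma cring_ring_of:
  assumes "comm_ring_alg A"
  shows "cring (ring_of A)"
proof -
  note ax = assms[unfolded comm_ring_alg_def]
  have "abelian_group (ring_of A)"
    by (rule abelian_groupI) (use ax in \<open>simp_all add: ring_of_simps, metis+\<close>)
  moreover have "comm_monoid (ring_of A)"
    by (rule comm_monoidI) (use ax in \<open>simp_all add: ring_of_simps, metis\<close>)
  ultimately show ?thesis
    by (rule cringI) (use ax in \<open>simp add: ring_of_simps\<close>)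
qed

lemma aneg_eq_a_inv:
  assumes "comm_ring_alg A" and "x \<in> acar A"
  shows "aneg A x = \<ominus>\<^bsub>ring_of A\<^esub> x"
proof -
  interpret cring "ring_of A" by (rule cring_ring_of[OF assms(1)])
  show ?thesis
    using assms unfolding comm_ring_alg_def
    by (intro minus_equality[symmetric]) (simp_all add: add.m_comm ring_of_simps)
qed

lemma pw_eq_nat_pow: "pw A x n = x [^]\<^bsub>ring_of A\<^esub> n"
  by (induct n) (simp_all add: ring_of_simps)

lemma natc_eq_add_pow: "natc A n = [n] \<cdot>\<^bsub>ring_of A\<^esub> \<one>\<^bsub>ring_of A\<^esub>"
  by (induct n) (simp_all add: add_pow_def ring_of_simps)

lemma natc_closed:
  assumes "comm_ring_alg A"
  shows "natc A n \<in> acar A"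
proof -
  interpret cring "ring_of A" by (rule cring_ring_of[OF assms])
  show ?thesis using add.nat_pow_closed[OF one_closed] by (simp add: natc_eq_add_pow ring_of_simps)
qed

lemma pw_closed:
  assumes "comm_ring_alg A" and "x \<in> acar A"
  shows "pw A x n \<in> acar A"
proof -
  interpret cring "ring_of A" by (rule cring_ring_of[OF assms(1)])
  show ?thesis using nat_pow_closed assms(2) by (simp add: pw_eq_nat_pow ring_of_simps)
qed

lemma comm_ring_alg_closed:
  assumes "comm_ring_alg A"
  shows "azero A \<in> acar A" "aone A \<in> acar A"
    and "x \<in> acar A \<Longrightarrow> aneg A x \<in> acar A"
    and "x \<in> acar A \<Longrightarrow> y \<in> acar A \<Longrightarrow> aadd A x y \<in> acar A"
    and "x \<in> acar A \<Longrightarrow> y \<in> acar A \<Longrightarrow> amul A x y \<in> acar A"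
  using assms by (simp_all add: comm_ring_alg_def)

lemma is_alg_closed:
  assumes "is_alg A"
  shows "azero A \<in> acar A" "aone A \<in> acar A"
    and "x \<in> acar A \<Longrightarrow> aneg A x \<in> acar A" "x \<in> acar A \<Longrightarrow> astar A x \<in> acar A"
    and "x \<in> acar A \<Longrightarrow> y \<in> acar A \<Longrightarrow> aadd A x y \<in> acar A"
    and "x \<in> acar A \<Longrightarrow> y \<in> acar A \<Longrightarrow> amul A x y \<in> acar A"
    and "Factorial_Ring.prime p \<Longrightarrow> x \<in> acar A \<Longrightarrow> aroot A p x \<in> acar A"
  using assms by (simp_all add: is_alg_def)

section \<open>Commutative algebra\<close>

lemma (in cring) weak_inverse_unique:
  assumes x: "x \<in> carrier R" and y: "y \<in> carrier R" and y': "y' \<in> carrier R"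
    and "x \<otimes> x \<otimes> y = x" "x \<otimes> (y \<otimes> y) = y"
    and "x \<otimes> x \<otimes> y' = x" "x \<otimes> (y' \<otimes> y') = y'"
  shows "y = y'"
proof -
  have "x \<otimes> y = (x \<otimes> x \<otimes> y') \<otimes> y" using assms by simp
  also have "\<dots> = (x \<otimes> x \<otimes> y) \<otimes> y'" using x y y' by algebra
  also have "\<dots> = x \<otimes> y'" using assms by simp
  finally have xy: "x \<otimes> y = x \<otimes> y'" .
  have "y = (x \<otimes> y) \<otimes> y" using assms by algebra
  also have "\<dots> = (x \<otimes> y') \<otimes> y" by (simp only: xy)
  also have "\<dots> = y' \<otimes> (x \<otimes> y)" using x y y' by algebra
  also have "\<dots> = y' \<otimes> (x \<otimes> y')" by (simp only: xy)
  also have "\<dots> = x \<otimes> (y' \<otimes> y')" using x y' by algebra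
  also have "\<dots> = y'" using assms by simp
  finally show ?thesis .
qed

lemma (in field) weak_inverse_eq:
  assumes x: "x \<in> carrier R" and y: "y \<in> carrier R" and "x \<otimes> x \<otimes> y = x" "x \<otimes> (y \<otimes> y) = y"
  shows "y = (if x = \<zero> then \<zero> else inv x)"
proof (cases "x = \<zero>")
  case True
  then show ?thesis using assms by simp
next
  case False
  then have u: "inv x \<in> carrier R" "x \<otimes> inv x = \<one>"
    using x field_Units by auto
  have "x \<otimes> x \<otimes> inv x = x" using x u by (simp add: m_assoc)
  moreover have "x \<otimes> (inv x \<otimes> inv x) = inv x" using x u by (simp flip: m_assoc)
  ultimately show ?thesis
    using weak_inverse_unique[OF x y u(1) assms(3,4)] False by simp
qed

lemma (in domain) nat_pow_eq_zero_imp_zero: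
  assumes "x \<in> carrier R" and "x [^] (n :: nat) = \<zero>"
  shows "x = \<zero>"
  using assms(2) by (induct n) (use assms(1) integral in auto)

lemma (in cring) binomial_term_Suc:
  assumes a: "a \<in> carrier R" and b: "b \<in> carrier R"
  shows "a \<otimes> [(n choose k)] \<cdot> (a [^] k \<otimes> b [^] (n - k)) \<oplus>
      b \<otimes> [(n choose Suc k)] \<cdot> (a [^] Suc k \<otimes> b [^] (n - Suc k))
    = [(Suc n choose Suc k)] \<cdot> (a [^] Suc k \<otimes> b [^] (Suc n - Suc k))"
proof -
  have "a \<otimes> [(n choose k)] \<cdot> (a [^] k \<otimes> b [^] (n - k)) = [(n choose k)] \<cdot> (a [^] Suc k \<otimes> b [^] (n - k))"
    using a b by (simp add: add_pow_rdistr m_ac)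
  moreover have "b \<otimes> [(n choose Suc k)] \<cdot> (a [^] Suc k \<otimes> b [^] (n - Suc k))
    = [(n choose Suc k)] \<cdot> (a [^] Suc k \<otimes> b [^] (n - k))"
  proof (cases "Suc k \<le> n")
    case True
    then have "b \<otimes> b [^] (n - Suc k) = b [^] (n - k)"
      using b by (simp add: Suc_diff_Suc flip: nat_pow_Suc2)
    moreover have "b \<otimes> (a [^] Suc k \<otimes> b [^] (n - Suc k)) = a [^] Suc k \<otimes> (b \<otimes> b [^] (n - Suc k))"
      using a b by (intro m_lcomm) simp_all
    ultimately show ?thesis using a b by (simp only: add_pow_rdistr nat_pow_closed m_closed)
  next
    case False
    then show ?thesis using a b by (simp add: binomial_eq_0)
  qed
  ultimately show ?thesis using a b by (simp add: add.nat_pow_mult)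
qed

lemma (in cring) binomial_expansion:
  assumes a: "a \<in> carrier R" and b: "b \<in> carrier R"
  shows "(a \<oplus> b) [^] n = (\<Oplus>k \<in> {..n}. [(n choose k)] \<cdot> (a [^] k \<otimes> b [^] (n - k)))"
proof (induct n)
  case 0
  then show ?case using a b by simp
next
  case (Suc n)
  define T where "T m k = [(m choose k)] \<cdot> (a [^] k \<otimes> b [^] (m - k))" for m k
  have T_closed [simp]: "T m k \<in> carrier R" for m k unfolding T_def using a b by simp
  have T_Suc: "T (Suc n) (Suc k) = a \<otimes> T n k \<oplus> b \<otimes> T n (Suc k)" for k
    unfolding T_def by (rule binomial_term_Suc[OF a b, symmetric])
  have "(a \<oplus> b) [^] Suc n = a \<otimes> (\<Oplus>k \<in> {..n}. T n k) \<oplus> b \<otimes> (\<Oplus>k \<in> {..n}. T n k)"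
    using Suc a b by (simp add: T_def l_distr m_comm finsum_closed)
  also have "\<dots> = (\<Oplus>k \<in> {..n}. a \<otimes> T n k) \<oplus> ((\<Oplus>k \<in> {..n}. b \<otimes> T n (Suc k)) \<oplus> b \<otimes> T n 0)"
  proof -
    have "(\<Oplus>k \<in> {..n}. b \<otimes> T n k) = (\<Oplus>k \<in> {..Suc n}. b \<otimes> T n k)"
      using a b by (simp add: finsum_Suc T_def Pi_def binomial_eq_0)
    also have "\<dots> = (\<Oplus>k \<in> {..n}. b \<otimes> T n (Suc k)) \<oplus> b \<otimes> T n 0"
      using b by (intro finsum_Suc2) simp
    finally show ?thesis
      using a b by (simp add: finsum_rdistr)
  qed
  also have "\<dots> = (\<Oplus>k \<in> {..n}. T (Suc n) (Suc k)) \<oplus> T (Suc n) 0"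
    using a b by (simp add: T_Suc finsum_addf a_assoc) (simp add: T_def m_comm)
  also have "\<dots> = (\<Oplus>k \<in> {..Suc n}. T (Suc n) k)"
    by (rule finsum_Suc2[symmetric]) simp
  finally show ?case unfolding T_def .
qed

lemma (in ring) add_pow_one_mult: "[(m * n :: nat)] \<cdot> \<one> = [m] \<cdot> \<one> \<otimes> [n] \<cdot> \<one>"
  by (simp add: add_pow_ldistr add.nat_pow_pow mult.commute)

lemma (in cring) frobenius:
  assumes a: "a \<in> carrier R" and b: "b \<in> carrier R"
    and p: "Factorial_Ring.prime p" and char: "[(p :: nat)] \<cdot> \<one> = \<zero>"
  shows "(a \<oplus> b) [^] p = a [^] p \<oplus> b [^] p"
proof -
  define T where "T k = [(p choose k)] \<cdot> (a [^] k \<otimes> b [^] (p - k))" for k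
  have "T k = \<zero>" if "k \<in> {..p} - {0, p}" for k
  proof -
    have "p dvd (p choose k)" using that p by (intro dvd_choose_prime) auto
    then obtain m where "p choose k = p * m" by blast
    then have "[(p choose k)] \<cdot> \<one> = \<zero>"
      using char by (simp add: add_pow_one_mult)
    moreover have "T k = [(p choose k)] \<cdot> \<one> \<otimes> (a [^] k \<otimes> b [^] (p - k))"
      unfolding T_def using a b by (simp add: add_pow_ldistr)
    ultimately show ?thesis using a b by simp
  qed
  then have "(\<Oplus>k \<in> {..p}. T k) = (\<Oplus>k \<in> {0, p}. T k)"
    using a b by (intro add.finprod_mono_neutral_cong_right) (auto simp: T_def)
  moreover have "p \<noteq> 0" using p by auto
  ultimately show ?thesis
    using binomial_expansion[OF a b, of p] a b by (simp add: T_def a_comm)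
qed

lemma (in domain) prime_char_nat_pow_inj:
  assumes x: "x \<in> carrier R" and y: "y \<in> carrier R"
    and p: "Factorial_Ring.prime p" and char: "[(p :: nat)] \<cdot> \<one> = \<zero>"
    and eq: "x [^] p = y [^] p"
  shows "x = y"
proof -
  have cancel: "x \<ominus> y \<oplus> y = x" using x y by algebra
  then have "(x \<ominus> y) [^] p \<oplus> y [^] p = x [^] p"
    using frobenius[of "x \<ominus> y" y, OF _ y p char] x y by simp
  then have "(x \<ominus> y) [^] p \<oplus> y [^] p = y [^] p" using eq by simp
  then have "(x \<ominus> y) [^] p = \<zero>" using x y by simp
  then have "x \<ominus> y = \<zero>"
    using x y nat_pow_eq_zero_imp_zero[of "x \<ominus> y" p] by simp
  then show ?thesis using cancel y by simp
qed

lemma (in domain) exists_prime_char: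
  assumes "n > 0" and "[(n :: nat)] \<cdot> \<one> = \<zero>"
  shows "\<exists>q. Factorial_Ring.prime q \<and> [(q :: nat)] \<cdot> \<one> = \<zero>"
  using assms
proof (induct n rule: less_induct)
  case (less n)
  have "n \<noteq> 1" using less.prems by auto
  then obtain q where q: "Factorial_Ring.prime q" "q dvd n"
    using prime_factor_nat by blast
  then obtain m where n: "n = q * m" by blast
  then have "[q] \<cdot> \<one> = \<zero> \<or> [m] \<cdot> \<one> = \<zero>"
    using less.prems integral by (simp add: add_pow_one_mult)
  moreover have "m < n" "m > 0" using n q(1) less.prems by (auto simp: prime_gt_Suc_0_nat)
  ultimately show ?case using q(1) less.hyps by blast
qed

lemma (in ring) exists_maximalideal_superset:
  assumes I: "ideal I R" and one: "\<one> \<notin> I"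
  shows "\<exists>M. maximalideal M R \<and> I \<subseteq> M"
proof -
  define S where "S = {J. ideal J R \<and> I \<subseteq> J \<and> \<one> \<notin> J}"
  have "\<exists>M\<in>S. \<forall>J\<in>S. M \<subseteq> J \<longrightarrow> J = M"
  proof (rule subset_Zorn_nonempty)
    show "S \<noteq> {}" using I one unfolding S_def by blast
  next
    fix C assume C: "C \<noteq> {}" "subset.chain S C"
    then have CS: "C \<subseteq> S" unfolding pred_on.chain_def by blast
    with C(2) have "subset.chain {J. ideal J R} C"
      unfolding S_def pred_on.chain_def by auto
    then have "ideal (\<Union>C) R" using chain_Union_is_ideal[of C] C(1) by simp
    moreover obtain J where "J \<in> C" using C(1) by blast
    ultimately show "\<Union>C \<in> S" using CS unfolding S_def by blast
  qed
  then obtain M where M: "ideal M R" "I \<subseteq> M" "\<one> \<notin> M"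
    and max: "\<And>J. ideal J R \<Longrightarrow> M \<subseteq> J \<Longrightarrow> \<one> \<notin> J \<Longrightarrow> J = M"
    unfolding S_def by auto
  have "maximalideal M R"
  proof (rule maximalidealI[OF M(1)])
    show "carrier R \<noteq> M" using M(3) by blast
    fix J assume "ideal J R" "M \<subseteq> J" "J \<subseteq> carrier R"
    then show "J = M \<or> J = carrier R"
      using max ideal.one_imp_carrier by metis
  qed
  with M(2) show ?thesis by blast
qed

lemma (in cring) exists_maximalideal_not_mem:
  assumes x: "x \<in> carrier R" and s: "s \<in> carrier R" and reg: "x \<otimes> x \<otimes> s = x" and "x \<noteq> \<zero>"
  shows "\<exists>M. maximalideal M R \<and> x \<notin> M"
proof -
  define e where "e = x \<otimes> s"
  have e: "e \<in> carrier R" unfolding e_def using x s by simp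
  have xe: "x \<otimes> e = x" unfolding e_def using reg x s by (simp add: m_assoc)
  then have "e \<noteq> \<zero>" using \<open>x \<noteq> \<zero>\<close> x by auto
  have idem: "e \<otimes> e = e" unfolding e_def using xe x s e by (metis e_def m_assoc m_closed m_comm)
  have "\<one> \<notin> PIdl (\<one> \<ominus> e)"
  proof
    assume "\<one> \<in> PIdl (\<one> \<ominus> e)"
    then obtain r where r: "r \<in> carrier R" "\<one> = r \<otimes> (\<one> \<ominus> e)" unfolding cgenideal_def by blast
    then have "e = e \<otimes> (r \<otimes> (\<one> \<ominus> e))" using e by (metis r_one)
    also have "\<dots> = r \<otimes> (e \<ominus> e \<otimes> e)" using r(1) e by algebra
    also have "\<dots> = \<zero>" using idem e r(1) by (simp add: r_neg minus_eq)
    finally show False using \<open>e \<noteq> \<zero>\<close> by contradiction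
  qed
  then obtain M where M: "maximalideal M R" "PIdl (\<one> \<ominus> e) \<subseteq> M"
    using exists_maximalideal_superset cgenideal_ideal e by blast
  then have "\<one> \<ominus> e \<in> M" using cgenideal_self e by blast
  moreover have "x \<notin> M"
  proof
    assume "x \<in> M"
    then have "e \<in> M" unfolding e_def using M(1) s by (simp add: ideal.I_r_closed maximalideal.axioms(1))
    moreover have "\<one> = (\<one> \<ominus> e) \<oplus> e" using e by algebra
    ultimately have "\<one> \<in> M" using \<open>\<one> \<ominus> e \<in> M\<close> M(1)
      by (metis additive_subgroup.a_closed ideal.axioms(1) maximalideal.axioms(1))
    then show False using M(1) maximalideal.I_notcarr ideal.one_imp_carrier maximalideal.axioms(1) by metis
  qed
  ultimately show ?thesis using M(1) by blast
qed

section \<open>A quasi-equational form of RCR[L_F]\<close>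

definition char_idem :: "('a, 'b) alg_scheme \<Rightarrow> nat \<Rightarrow> 'a" where
  "char_idem A p = aadd A (aone A) (aneg A (amul A (astar A (natc A p)) (natc A p)))"

definition RCR_LF_equational :: "('a, 'b) alg_scheme \<Rightarrow> bool" where
  "RCR_LF_equational A \<longleftrightarrow> RCR A \<and>
     (\<forall>x\<in>acar A. astar A x \<in> acar A \<and> inv_fm A x (astar A x)) \<and>
     (\<forall>p x. Factorial_Ring.prime p \<and> x \<in> acar A \<longrightarrow>
        aroot A p x \<in> acar A \<and> pw A (aroot A p x) p = amul A (char_idem A p) x)"

lemma RCR_LF_equational_is_alg: "RCR_LF_equational A \<Longrightarrow> is_alg A"
  by (simp add: RCR_LF_equational_def RCR_def is_alg_def comm_ring_alg_def)

lemma inv_fm_unique: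
  assumes "comm_ring_alg A" and "x \<in> acar A" "y \<in> acar A" "y' \<in> acar A"
    and "inv_fm A x y" "inv_fm A x y'"
  shows "y = y'"
  using cring.weak_inverse_unique[OF cring_ring_of[OF assms(1)]] assms(2-)
  by (simp add: inv_fm_def ring_of_simps)

lemma RCR_LF_iff_equational: "RCR_LF A \<longleftrightarrow> RCR_LF_equational A"
proof
  assume A: "RCR_LF A"
  have cr: "comm_ring_alg A" using A by (simp add: RCR_LF_def RCR_def)
  have root: "pw A (aroot A p x) p = amul A (char_idem A p) x"
    if "Factorial_Ring.prime p" "x \<in> acar A" for p x
  proof -
    have "root_fm A p x (aroot A p x)" using A that unfolding RCR_LF_def by blast
    then obtain z where z: "z \<in> acar A" "inv_fm A (natc A p) z"
      "pw A (aroot A p x) p = amul A (aadd A (aone A) (aneg A (amul A z (natc A p)))) x"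
      unfolding root_fm_def by blast
    have "astar A (natc A p) \<in> acar A" "inv_fm A (natc A p) (astar A (natc A p))"
      using A natc_closed[OF cr] unfolding RCR_LF_def by blast+
    then have "z = astar A (natc A p)"
      using inv_fm_unique[OF cr natc_closed[OF cr]] z(1,2) by blast
    with z(3) show ?thesis by (simp add: char_idem_def)
  qed
  show "RCR_LF_equational A" unfolding RCR_LF_equational_def
  proof (intro conjI allI impI)
    show "RCR A" "\<forall>x\<in>acar A. astar A x \<in> acar A \<and> inv_fm A x (astar A x)"
      using A by (simp_all add: RCR_LF_def)
    fix p :: nat and x assume "Factorial_Ring.prime p \<and> x \<in> acar A"
    then show "aroot A p x \<in> acar A" "pw A (aroot A p x) p = amul A (char_idem A p) x"
      using A root by (simp_all add: RCR_LF_def)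
  qed
next
  assume A: "RCR_LF_equational A"
  then have "natc A p \<in> acar A" for p
    by (intro natc_closed) (simp add: RCR_LF_equational_def RCR_def)
  show "RCR_LF A" unfolding RCR_LF_def
  proof (intro conjI allI impI)
    show "RCR A" "\<forall>x\<in>acar A. astar A x \<in> acar A \<and> inv_fm A x (astar A x)"
      using A by (simp_all add: RCR_LF_equational_def)
    fix p :: nat and x assume "Factorial_Ring.prime p \<and> x \<in> acar A"
    then show "aroot A p x \<in> acar A" "root_fm A p x (aroot A p x)"
      using A \<open>natc A p \<in> acar A\<close> unfolding root_fm_def char_idem_def RCR_LF_equational_def
      by auto
  qed
qed

lemma hom_alg_ops:
  assumes "hom_alg A B h"
  shows "x \<in> acar A \<Longrightarrow> h x \<in> acar B"
    and "h (azero A) = azero B" "h (aone A) = aone B"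
    and "x \<in> acar A \<Longrightarrow> h (aneg A x) = aneg B (h x)"
    and "x \<in> acar A \<Longrightarrow> h (astar A x) = astar B (h x)"
    and "x \<in> acar A \<Longrightarrow> y \<in> acar A \<Longrightarrow> h (aadd A x y) = aadd B (h x) (h y)"
    and "x \<in> acar A \<Longrightarrow> y \<in> acar A \<Longrightarrow> h (amul A x y) = amul B (h x) (h y)"
    and "Factorial_Ring.prime p \<Longrightarrow> x \<in> acar A \<Longrightarrow> h (aroot A p x) = aroot B p (h x)"
  using assms by (simp_all add: hom_alg_def)

lemma hom_alg_pw:
  assumes "hom_alg A B h" and "comm_ring_alg A" and "x \<in> acar A"
  shows "h (pw A x n) = pw B (h x) n"
  using assms pw_closed[OF assms(2,3)] by (induct n) (simp_all add: hom_alg_def comm_ring_alg_closed)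

lemma hom_alg_natc:
  assumes "hom_alg A B h" and "comm_ring_alg A"
  shows "h (natc A n) = natc B n"
  using assms natc_closed[OF assms(2)] by (induct n) (simp_all add: hom_alg_def comm_ring_alg_closed)

lemma char_idem_closed:
  assumes "is_alg A" and "comm_ring_alg A"
  shows "char_idem A p \<in> acar A"
  using is_alg_closed[OF assms(1)] natc_closed[OF assms(2)] by (simp add: char_idem_def)

lemma hom_alg_char_idem:
  assumes "hom_alg A B h" and "is_alg A" and "comm_ring_alg A"
  shows "h (char_idem A p) = char_idem B p"
  using assms natc_closed[OF assms(3)] hom_alg_natc[OF assms(1,3)]
  by (simp add: char_idem_def hom_alg_def is_alg_def)

lemma comm_ring_alg_subdirect:
  assumes A: "is_alg A"
    and F: "\<And>i. i \<in> I \<Longrightarrow> comm_ring_alg (F i) \<and> hom_alg A (F i) (h i)"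
    and sep: "\<And>x y. x \<in> acar A \<Longrightarrow> y \<in> acar A \<Longrightarrow> (\<And>i. i \<in> I \<Longrightarrow> h i x = h i y) \<Longrightarrow> x = y"
  shows "comm_ring_alg A"
proof -
  note A_closed = is_alg_closed[OF A]
  have hom: "hom_alg A (F i) (h i)" and F_ring: "comm_ring_alg (F i)" if "i \<in> I" for i
    using F[OF that] by blast+
  note h_ops = hom_alg_ops[OF hom]
  note F_ax = F_ring[unfolded comm_ring_alg_def]
  show ?thesis
    unfolding comm_ring_alg_def
  proof (intro conjI ballI)
    fix x y z assume xyz: "x \<in> acar A" "y \<in> acar A" "z \<in> acar A"
    show "aadd A (aadd A x y) z = aadd A x (aadd A y z)"
      and "amul A (amul A x y) z = amul A x (amul A y z)"
      and "amul A x (aadd A y z) = aadd A (amul A x y) (amul A x z)"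
      by (rule sep; simp add: xyz A_closed h_ops; use F_ax h_ops(1) xyz in blast)+
  next
    fix x y assume xyz: "x \<in> acar A" "y \<in> acar A"
    show "aadd A x y = aadd A y x" and "amul A x y = amul A y x"
      by (rule sep; simp add: xyz A_closed h_ops; use F_ax h_ops(1) xyz in blast)+
  next
    fix x assume xyz: "x \<in> acar A"
    show "aadd A x (azero A) = x" and "aadd A x (aneg A x) = azero A" and "amul A x (aone A) = x"
      by (rule sep; simp add: xyz A_closed h_ops; use F_ax h_ops(1) xyz in blast)+
  qed (simp_all add: A_closed)
qed

lemma RCR_LF_equational_subdirect:
  assumes A: "is_alg A"
    and F: "\<And>i. i \<in> I \<Longrightarrow> RCR_LF_equational (F i) \<and> hom_alg A (F i) (h i)"
    and sep: "\<And>x y. x \<in> acar A \<Longrightarrow> y \<in> acar A \<Longrightarrow> (\<And>i. i \<in> I \<Longrightarrow> h i x = h i y) \<Longrightarrow> x = y"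
  shows "RCR_LF_equational A"
proof -
  note A_closed = is_alg_closed[OF A]
  have hom: "hom_alg A (F i) (h i)" and F_eq: "RCR_LF_equational (F i)" if "i \<in> I" for i
    using F[OF that] by blast+
  note h_ops = hom_alg_ops[OF hom]
  have ring: "comm_ring_alg A"
    by (rule comm_ring_alg_subdirect[of A I F h, OF A _ sep])
      (use hom F_eq in \<open>auto simp: RCR_LF_equational_def RCR_def\<close>)
  have h_pw: "h i (pw A x n) = pw (F i) (h i x) n" if "i \<in> I" "x \<in> acar A" for i x n
    using hom_alg_pw[OF hom ring] that by blast
  have "reduced_alg A"
    unfolding reduced_alg_def
  proof (intro ballI allI impI)
    fix x n assume x: "x \<in> acar A" and nil: "pw A x n = azero A"
    show "x = azero A"
    proof (rule sep[OF x A_closed(1)])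
      fix i assume i: "i \<in> I"
      have "pw (F i) (h i x) n = azero (F i)"
        using h_pw[OF i x] h_ops(2)[OF i] nil by metis
      moreover have "reduced_alg (F i)"
        using F_eq[OF i] by (simp add: RCR_LF_equational_def RCR_def)
      ultimately show "h i x = h i (azero A)"
        using h_ops(1)[OF i x] h_ops(2)[OF i] unfolding reduced_alg_def by metis
    qed
  qed
  moreover have "astar A x \<in> acar A \<and> inv_fm A x (astar A x)" if x: "x \<in> acar A" for x
    unfolding inv_fm_def
    using F_eq x h_ops(1) by (intro conjI sep) (simp_all add: A_closed h_ops RCR_LF_equational_def inv_fm_def)
  moreover have "aroot A p x \<in> acar A \<and> pw A (aroot A p x) p = amul A (char_idem A p) x"
    if p: "Factorial_Ring.prime p" and x: "x \<in> acar A" for p x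
    using F_eq p x h_ops(1)
    by (intro conjI sep)
      (simp_all add: A_closed h_ops pw_closed[OF ring] char_idem_closed[OF A ring] h_pw
        hom_alg_char_idem[OF hom A ring] RCR_LF_equational_def)
  ultimately show ?thesis
    using ring by (simp add: RCR_LF_equational_def RCR_def)
qed

lemma RCR_LF_subalgebra:
  assumes "embeds A B" and "RCR_LF B"
  shows "RCR_LF A"
proof -
  obtain h where "is_alg A" "hom_alg A B h" "inj_on h (acar A)"
    using assms(1) unfolding embeds_def by blast
  then have "RCR_LF_equational A"
    using assms(2)
    by (intro RCR_LF_equational_subdirect[where I = "UNIV :: unit set" and F = "\<lambda>_. B" and h = "\<lambda>_. h"])
      (auto simp: RCR_LF_iff_equational dest: inj_onD)
  then show ?thesis by (simp add: RCR_LF_iff_equational)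
qed

lemma field_ring_of:
  assumes "field_alg F"
  shows "field (ring_of F)"
proof -
  have "comm_ring_alg F" using assms unfolding field_alg_def by blast
  then interpret cring "ring_of F" by (rule cring_ring_of)
  show ?thesis
    by (rule cring_fieldI2) (use assms in \<open>auto simp: field_alg_def ring_of_simps\<close>)
qed

lemma char_idem_impl_closed_field:
  assumes "impl_closed_field F"
  shows "char_idem F p = (if natc F p = azero F then aone F else azero F)"
proof -
  have "field_alg F" using assms by (simp add: impl_closed_field_def weakly_rooted_def)
  then interpret field "ring_of F" by (rule field_ring_of)
  have cr: "comm_ring_alg F" using \<open>field_alg F\<close> by (simp add: field_alg_def)
  have star: "astar F (natc F p) \<in> acar F"
    "natc F p \<noteq> azero F \<Longrightarrow> amul F (natc F p) (astar F (natc F p)) = aone F"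
    "natc F p = azero F \<Longrightarrow> astar F (natc F p) = azero F"
    using assms natc_closed[OF cr] unfolding impl_closed_field_def by blast+
  show ?thesis
    using star aneg_eq_a_inv[OF cr] natc_closed[OF cr]
    by (auto simp: char_idem_def ring_of_simps[symmetric] m_comm r_neg)
qed

lemma impl_closed_field_RCR_LF:
  assumes "impl_closed_field F"
  shows "RCR_LF F"
proof -
  have "field_alg F" using assms by (simp add: impl_closed_field_def weakly_rooted_def)
  then interpret field "ring_of F" by (rule field_ring_of)
  have cr: "comm_ring_alg F" using \<open>field_alg F\<close> by (simp add: field_alg_def)
  note icf = assms[unfolded impl_closed_field_def]
  have "reduced_alg F"
    using nat_pow_eq_zero_imp_zero by (simp add: reduced_alg_def pw_eq_nat_pow ring_of_simps)
  moreover have "astar F x \<in> acar F \<and> inv_fm F x (astar F x)" if x: "x \<in> acar F" for x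
  proof (cases "x = azero F")
    case True
    moreover have "astar F x = azero F" using icf x True by blast
    ultimately show ?thesis using x by (simp add: inv_fm_def ring_of_simps[symmetric])
  next
    case False
    then have "astar F x \<in> carrier (ring_of F)" "x \<otimes>\<^bsub>ring_of F\<^esub> astar F x = \<one>\<^bsub>ring_of F\<^esub>"
      using icf x by (simp_all add: ring_of_simps)
    then show ?thesis
      using x by (simp add: inv_fm_def ring_of_simps[symmetric] m_assoc flip: m_assoc[of x])
  qed
  moreover have "aroot F p x \<in> acar F \<and> pw F (aroot F p x) p = amul F (char_idem F p) x"
    if "Factorial_Ring.prime p" "x \<in> acar F" for p x
    using icf that prime_gt_0_nat[OF that(1)]
    by (auto simp: char_idem_impl_closed_field[OF assms] pw_eq_nat_pow ring_of_simps[symmetric] nat_pow_zero)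
  ultimately show ?thesis
    using cr by (simp add: RCR_LF_iff_equational RCR_LF_equational_def RCR_def)
qed

lemma ICM_imp_RCR_LF:
  assumes "ICM TYPE('i) A TYPE('c alg)"
  shows "RCR_LF A"
proof -
  obtain I :: "'i set" and F :: "'i \<Rightarrow> 'c alg" and h where
    "is_alg A" "\<forall>i\<in>I. impl_closed_field (F i) \<and> hom_alg A (F i) (h i)"
    "\<forall>x\<in>acar A. \<forall>y\<in>acar A. (\<forall>i\<in>I. h i x = h i y) \<longrightarrow> x = y"
    using assms unfolding ICM_def by blast
  then have "RCR_LF_equational A"
    using impl_closed_field_RCR_LF by (intro RCR_LF_equational_subdirect[of A I F h]) (auto simp: RCR_LF_iff_equational)
  then show ?thesis by (simp add: RCR_LF_iff_equational)
qed

section \<open>Quotients by maximal ideals\<close>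

text \<open>In characteristic \<open>p\<close> the \<open>p\<close>-th root selected by \<open>THE\<close> is unique by \<open>prime_char_nat_pow_inj\<close>.\<close>

definition field_alg_of :: "'a ring \<Rightarrow> 'a alg" where
  "field_alg_of Q = \<lparr>acar = carrier Q, aadd = add Q, amul = mult Q, aneg = a_inv Q,
     azero = \<zero>\<^bsub>Q\<^esub>, aone = \<one>\<^bsub>Q\<^esub>,
     astar = (\<lambda>x. if x = \<zero>\<^bsub>Q\<^esub> then \<zero>\<^bsub>Q\<^esub> else inv\<^bsub>Q\<^esub> x),
     aroot = (\<lambda>p x. if [p] \<cdot>\<^bsub>Q\<^esub> \<one>\<^bsub>Q\<^esub> = \<zero>\<^bsub>Q\<^esub> then (THE y. y \<in> carrier Q \<and> y [^]\<^bsub>Q\<^esub> p = x)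
                   else \<zero>\<^bsub>Q\<^esub>)\<rparr>"

lemma field_alg_of_simps:
  "acar (field_alg_of Q) = carrier Q" "aadd (field_alg_of Q) = add Q" "amul (field_alg_of Q) = mult Q"
  "aneg (field_alg_of Q) = a_inv Q" "azero (field_alg_of Q) = \<zero>\<^bsub>Q\<^esub>" "aone (field_alg_of Q) = \<one>\<^bsub>Q\<^esub>"
  "astar (field_alg_of Q) x = (if x = \<zero>\<^bsub>Q\<^esub> then \<zero>\<^bsub>Q\<^esub> else inv\<^bsub>Q\<^esub> x)"
  "aroot (field_alg_of Q) p x = (if [p] \<cdot>\<^bsub>Q\<^esub> \<one>\<^bsub>Q\<^esub> = \<zero>\<^bsub>Q\<^esub>
     then (THE y. y \<in> carrier Q \<and> y [^]\<^bsub>Q\<^esub> p = x) else \<zero>\<^bsub>Q\<^esub>)"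
  by (simp_all add: field_alg_of_def)

lemma ring_of_field_alg_of: "ring_of (field_alg_of Q) = Q"
  by (simp add: ring_of_def field_alg_of_def)

lemma natc_field_alg_of: "natc (field_alg_of Q) n = [n] \<cdot>\<^bsub>Q\<^esub> \<one>\<^bsub>Q\<^esub>"
  using natc_eq_add_pow[of "field_alg_of Q"] by (simp add: ring_of_field_alg_of)

lemma pw_field_alg_of: "pw (field_alg_of Q) x n = x [^]\<^bsub>Q\<^esub> n"
  using pw_eq_nat_pow[of "field_alg_of Q"] by (simp add: ring_of_field_alg_of)

lemma aroot_field_alg_of:
  assumes "field Q" and y: "y \<in> carrier Q" and p: "Factorial_Ring.prime p"
    and char: "[p] \<cdot>\<^bsub>Q\<^esub> \<one>\<^bsub>Q\<^esub> = \<zero>\<^bsub>Q\<^esub>"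
  shows "aroot (field_alg_of Q) p (y [^]\<^bsub>Q\<^esub> p) = y"
proof -
  interpret field Q by (rule assms(1))
  have "(THE z. z \<in> carrier Q \<and> z [^]\<^bsub>Q\<^esub> p = y [^]\<^bsub>Q\<^esub> p) = y"
    by (rule the_equality) (use y prime_char_nat_pow_inj[OF _ y p char] in auto)
  then show ?thesis using char by (simp add: field_alg_of_simps)
qed

lemma field_alg_field_alg_of:
  assumes "field Q"
  shows "field_alg (field_alg_of Q)"
proof -
  interpret field Q by (rule assms)
  have "comm_ring_alg (field_alg_of Q)"
    by (simp add: comm_ring_alg_def field_alg_of_simps a_ac m_ac r_distr r_neg)
  moreover have "\<exists>y\<in>carrier Q. x \<otimes>\<^bsub>Q\<^esub> y = \<one>\<^bsub>Q\<^esub>" if "x \<in> carrier Q" "x \<noteq> \<zero>\<^bsub>Q\<^esub>" for x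
    using that field_Units by (intro bexI[of _ "inv\<^bsub>Q\<^esub> x"]) auto
  ultimately show ?thesis
    by (simp add: field_alg_def field_alg_of_simps)
qed

lemma impl_closed_field_field_alg_of:
  assumes "field Q"
    and roots: "\<And>(p :: nat) x. Factorial_Ring.prime p \<Longrightarrow> [p] \<cdot>\<^bsub>Q\<^esub> \<one>\<^bsub>Q\<^esub> = \<zero>\<^bsub>Q\<^esub> \<Longrightarrow> x \<in> carrier Q
       \<Longrightarrow> \<exists>y\<in>carrier Q. y [^]\<^bsub>Q\<^esub> p = x"
  shows "impl_closed_field (field_alg_of Q)"
proof -
  interpret field Q by (rule assms(1))
  have root: "aroot (field_alg_of Q) p x \<in> carrier Q \<and> aroot (field_alg_of Q) p x [^]\<^bsub>Q\<^esub> p = x"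
    if "Factorial_Ring.prime p" "[p] \<cdot>\<^bsub>Q\<^esub> \<one>\<^bsub>Q\<^esub> = \<zero>\<^bsub>Q\<^esub>" "x \<in> carrier Q" for p x
    using roots[OF that] aroot_field_alg_of[OF assms(1) _ that(1,2)] by auto
  have "weakly_rooted (field_alg_of Q)"
  proof (cases "char_zero_alg (field_alg_of Q)")
    case False
    then obtain n :: nat where "n > 0" "[n] \<cdot>\<^bsub>Q\<^esub> \<one>\<^bsub>Q\<^esub> = \<zero>\<^bsub>Q\<^esub>"
      by (auto simp: char_zero_alg_def natc_field_alg_of field_alg_of_simps)
    then obtain q :: nat where "Factorial_Ring.prime q" "[q] \<cdot>\<^bsub>Q\<^esub> \<one>\<^bsub>Q\<^esub> = \<zero>\<^bsub>Q\<^esub>"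
      using exists_prime_char by blast
    then show ?thesis
      unfolding weakly_rooted_def natc_field_alg_of pw_field_alg_of field_alg_of_simps(1,5)
      using field_alg_field_alg_of[OF assms(1)] root by blast
  qed (simp add: weakly_rooted_def field_alg_field_alg_of[OF assms(1)])
  moreover have "inv\<^bsub>Q\<^esub> x \<in> carrier Q \<and> x \<otimes>\<^bsub>Q\<^esub> inv\<^bsub>Q\<^esub> x = \<one>\<^bsub>Q\<^esub>"
    if "x \<in> carrier Q" "x \<noteq> \<zero>\<^bsub>Q\<^esub>" for x
    using that field_Units by auto
  ultimately show ?thesis
    unfolding impl_closed_field_def field_alg_of_simps(1,5,6) natc_field_alg_of pw_field_alg_of
    using root by (auto simp: field_alg_of_simps(3,7,8))
qed

locale RCR_LF_field_hom =
  fixes A :: "('a, 'b) alg_scheme" and Q :: "'c ring" and \<phi> :: "'a \<Rightarrow> 'c"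
  assumes equational: "RCR_LF_equational A" and field: "field Q"
    and ring_hom: "\<phi> \<in> ring_hom (ring_of A) Q"
begin

lemma comm_ring_alg_A: "comm_ring_alg A"
  using equational by (simp add: RCR_LF_equational_def RCR_def)

sublocale ring_hom_cring "ring_of A" Q \<phi>
  using cring_ring_of[OF comm_ring_alg_A] domain.axioms(1)[OF field.axioms(1)[OF field]] ring_hom
  by (simp add: ring_hom_cring_def ring_hom_cring_axioms_def)

sublocale Q: field Q by (rule field)

lemma hom_natc: "\<phi> (natc A n) = [n] \<cdot>\<^bsub>Q\<^esub> \<one>\<^bsub>Q\<^esub>"
  by (induct n)
    (simp_all add: natc_closed[OF comm_ring_alg_A, folded ring_of_simps(1)] ring_of_simps(2-5)[symmetric]
      S.add.nat_pow_Suc)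

lemma hom_astar:
  assumes x: "x \<in> acar A"
  shows "\<phi> (astar A x) = astar (field_alg_of Q) (\<phi> x)"
proof -
  have s: "astar A x \<in> acar A" "inv_fm A x (astar A x)"
    using equational x by (simp_all add: RCR_LF_equational_def)
  then show ?thesis
    unfolding field_alg_of_simps
    using x by (intro Q.weak_inverse_eq) (simp_all add: inv_fm_def ring_of_simps[symmetric] flip: hom_mult)
qed

lemma hom_char_idem: "\<phi> (char_idem A p) = (if [p] \<cdot>\<^bsub>Q\<^esub> \<one>\<^bsub>Q\<^esub> = \<zero>\<^bsub>Q\<^esub> then \<one>\<^bsub>Q\<^esub> else \<zero>\<^bsub>Q\<^esub>)"
proof -
  have n: "natc A p \<in> acar A" by (rule natc_closed[OF comm_ring_alg_A])
  have s: "astar A (natc A p) \<in> acar A"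
    using equational n by (simp add: RCR_LF_equational_def)
  have "[p] \<cdot>\<^bsub>Q\<^esub> \<one>\<^bsub>Q\<^esub> \<noteq> \<zero>\<^bsub>Q\<^esub> \<Longrightarrow> [p] \<cdot>\<^bsub>Q\<^esub> \<one>\<^bsub>Q\<^esub> \<in> Units Q"
    using Q.field_Units by simp
  then show ?thesis
    using n s hom_astar[OF n]
    by (auto simp: char_idem_def field_alg_of_simps hom_natc aneg_eq_a_inv[OF comm_ring_alg_A]
        ring_of_simps[symmetric] S.r_neg)
qed

lemma hom_aroot_pow:
  assumes p: "Factorial_Ring.prime p" and x: "x \<in> acar A"
  shows "\<phi> (aroot A p x) [^]\<^bsub>Q\<^esub> p = (if [p] \<cdot>\<^bsub>Q\<^esub> \<one>\<^bsub>Q\<^esub> = \<zero>\<^bsub>Q\<^esub> then \<phi> x else \<zero>\<^bsub>Q\<^esub>)"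
proof -
  have "aroot A p x \<in> acar A" "pw A (aroot A p x) p = amul A (char_idem A p) x"
    using equational p x by (simp_all add: RCR_LF_equational_def)
  moreover have "char_idem A p \<in> acar A"
    using char_idem_closed[OF RCR_LF_equational_is_alg[OF equational] comm_ring_alg_A] .
  ultimately have "\<phi> (aroot A p x) [^]\<^bsub>Q\<^esub> p = \<phi> (char_idem A p) \<otimes>\<^bsub>Q\<^esub> \<phi> x"
    using x by (simp add: pw_eq_nat_pow ring_of_simps[symmetric] flip: ring.hom_nat_pow)
  then show ?thesis
    using x by (simp add: hom_char_idem ring_of_simps[symmetric])
qed

lemma hom_alg_field_alg_of: "hom_alg A (field_alg_of Q) \<phi>"
  unfolding hom_alg_def field_alg_of_simps(1-6)
proof (intro conjI ballI allI impI)
  fix x assume x: "x \<in> acar A"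
  then show "\<phi> x \<in> carrier Q" "\<phi> (astar A x) = astar (field_alg_of Q) (\<phi> x)"
    by (simp_all add: hom_astar ring_of_simps[symmetric])
  show "\<phi> (aneg A x) = \<ominus>\<^bsub>Q\<^esub> \<phi> x"
    using x by (simp add: aneg_eq_a_inv[OF comm_ring_alg_A] ring_of_simps[symmetric])
  fix y assume "y \<in> acar A"
  then show "\<phi> (aadd A x y) = \<phi> x \<oplus>\<^bsub>Q\<^esub> \<phi> y" "\<phi> (amul A x y) = \<phi> x \<otimes>\<^bsub>Q\<^esub> \<phi> y"
    using x by (simp_all add: ring_of_simps[symmetric])
next
  show "\<phi> (azero A) = \<zero>\<^bsub>Q\<^esub>" "\<phi> (aone A) = \<one>\<^bsub>Q\<^esub>"
    by (simp_all add: ring_of_simps[symmetric])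
next
  fix p :: nat and x assume p: "Factorial_Ring.prime p" and x: "x \<in> acar A"
  have r: "\<phi> (aroot A p x) \<in> carrier Q"
    using equational p x by (simp add: RCR_LF_equational_def ring_of_simps[symmetric])
  show "\<phi> (aroot A p x) = aroot (field_alg_of Q) p (\<phi> x)"
  proof (cases "[p] \<cdot>\<^bsub>Q\<^esub> \<one>\<^bsub>Q\<^esub> = \<zero>\<^bsub>Q\<^esub>")
    case True
    then show ?thesis
      using hom_aroot_pow[OF p x] aroot_field_alg_of[OF field r p] by simp
  next
    case False
    then show ?thesis
      using hom_aroot_pow[OF p x] Q.nat_pow_eq_zero_imp_zero[OF r] by (simp add: field_alg_of_simps)
  qed
qed

end

lemma impl_closed_field_quotient:
  assumes A: "RCR_LF_equational A" and M: "maximalideal M (ring_of A)"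
  shows "impl_closed_field (field_alg_of (ring_of A Quot M))"
    and "hom_alg A (field_alg_of (ring_of A Quot M)) (a_r_coset (ring_of A) M)"
proof -
  interpret cring "ring_of A"
    using A by (intro cring_ring_of) (simp add: RCR_LF_equational_def RCR_def)
  interpret maximalideal M "ring_of A" by (rule M)
  interpret RCR_LF_field_hom A "ring_of A Quot M" "a_r_coset (ring_of A) M"
    by (rule RCR_LF_field_hom.intro[OF A quotient_is_field[OF is_cring] rcos_ring_hom])
  show "hom_alg A (field_alg_of (ring_of A Quot M)) (a_r_coset (ring_of A) M)"
    by (rule hom_alg_field_alg_of)
  show "impl_closed_field (field_alg_of (ring_of A Quot M))"
  proof (rule impl_closed_field_field_alg_of[OF field])
    fix p :: nat and X
    assume p: "Factorial_Ring.prime p" and char: "[p] \<cdot>\<^bsub>ring_of A Quot M\<^esub> \<one>\<^bsub>ring_of A Quot M\<^esub> = \<zero>\<^bsub>ring_of A Quot M\<^esub>"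
      and "X \<in> carrier (ring_of A Quot M)"
    then obtain x where x: "x \<in> acar A" "X = M +>\<^bsub>ring_of A\<^esub> x"
      by (auto simp: FactRing_def A_RCOSETS_def' ring_of_simps)
    then have "M +>\<^bsub>ring_of A\<^esub> aroot A p x \<in> carrier (ring_of A Quot M)"
      using A p by (simp add: RCR_LF_equational_def ring_of_simps[symmetric])
    then show "\<exists>Y\<in>carrier (ring_of A Quot M). Y [^]\<^bsub>ring_of A Quot M\<^esub> p = X"
      using hom_aroot_pow[OF p x(1)] char x(2) by auto
  qed
qed

lemma maximalideals_separate_points:
  assumes A: "RCR_LF_equational A" and x: "x \<in> acar A" and y: "y \<in> acar A"
    and eq: "\<And>M. maximalideal M (ring_of A) \<Longrightarrow> M +>\<^bsub>ring_of A\<^esub> x = M +>\<^bsub>ring_of A\<^esub> y"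
  shows "x = y"
proof (rule ccontr)
  assume "x \<noteq> y"
  interpret cring "ring_of A"
    using A by (intro cring_ring_of) (simp add: RCR_LF_equational_def RCR_def)
  have xy: "x \<in> carrier (ring_of A)" "y \<in> carrier (ring_of A)"
    using x y by (simp_all add: ring_of_simps)
  define d where "d = x \<ominus>\<^bsub>ring_of A\<^esub> y"
  have d: "d \<in> carrier (ring_of A)" using xy by (simp add: d_def)
  have "d \<noteq> \<zero>\<^bsub>ring_of A\<^esub>"
    using \<open>x \<noteq> y\<close> xy by (simp add: d_def)
  moreover have "astar A d \<in> carrier (ring_of A)" "d \<otimes>\<^bsub>ring_of A\<^esub> d \<otimes>\<^bsub>ring_of A\<^esub> astar A d = d"
    using A d by (simp_all add: RCR_LF_equational_def inv_fm_def ring_of_simps)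
  ultimately obtain M where M: "maximalideal M (ring_of A)" "d \<notin> M"
    using exists_maximalideal_not_mem[OF d] by blast
  interpret maximalideal M "ring_of A" by (rule M(1))
  have "x \<in> M +>\<^bsub>ring_of A\<^esub> y"
    using a_rcos_self[OF xy(1)] unfolding eq[OF M(1)] .
  then have "d \<in> M"
    using a_rcos_module_minus[OF ring_axioms] xy by (simp add: d_def)
  with M(2) show False by contradiction
qed

lemma RCR_LF_imp_ICM:
  fixes A :: "('a, 'b) alg_scheme"
  assumes "RCR_LF A"
  shows "ICM TYPE('a set) A TYPE('a set alg)"
proof -
  have A: "RCR_LF_equational A" using assms by (simp add: RCR_LF_iff_equational)
  show ?thesis
    unfolding ICM_def
  proof (intro conjI exI)
    show "is_alg A" by (rule RCR_LF_equational_is_alg[OF A])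
    show "\<forall>M\<in>{M. maximalideal M (ring_of A)}.
      impl_closed_field (field_alg_of (ring_of A Quot M)) \<and>
      hom_alg A (field_alg_of (ring_of A Quot M)) (a_r_coset (ring_of A) M)"
      using impl_closed_field_quotient[OF A] by blast
    show "\<forall>x\<in>acar A. \<forall>y\<in>acar A.
      (\<forall>M\<in>{M. maximalideal M (ring_of A)}. a_r_coset (ring_of A) M x = a_r_coset (ring_of A) M y) \<longrightarrow> x = y"
      using maximalideals_separate_points[OF A] by blast
  qed
qed

theorem mainTheorem15:
  fixes A :: "'a alg" and B :: "'b alg"
  shows "(embeds A B \<and> RCR_LF B \<longrightarrow> RCR_LF A)
       \<and> (ICM TYPE('i) A TYPE('c alg) \<longrightarrow> RCR_LF A)
       \<and> (RCR_LF A \<longrightarrow> ICM TYPE('a set) A TYPE('a set alg))"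
  using RCR_LF_subalgebra ICM_imp_RCR_LF RCR_LF_imp_ICM by blast

end
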